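(* For $|q|<1$ and generic $k$ ($k\neq1$, no vanishing denominators): \begin{gather*} \sum_{n\ge0}\frac{(1-kq^{2n})(k;q)_n}{(1-k)(q;q)_n}(-1)^nk^nq^{n(3n-1)/2}=(kq;q)_\infty,\\ \sum_{n\ge0}\frac{(1-kq^{4n})(-q,k;q^2)_n}{(1-k)(-kq,q^2;q^2)_n}(-1)^nk^nq^{2n^2-n}=\frac{(kq^2;q^2)_\infty}{(-kq;q^2)_\infty},\\ \sum_{n\ge0}\frac{(1-kq^{2n})(-1,k;q)_n}{(1-k)(-kq,q;q)_n}(-1)^nk^nq^{n^2}=\frac{(kq;q)_\infty}{(-kq;q)_\infty},\\ \sum_{n\ge0}\frac{(1-kq^{2n})(k^2;q^2)_n}{(1-k)(q^2;q^2)_n}(-1)^nq^{n^2}=(kq;q)_\infty(q;q^2)_\infty,\\ \sum_{n\ge0}\frac{(1-kq^{4n})(-q;q^2)_n(k^2;q^4)_n}{(1-k)(-kq;q^2)_n(q^4;q^4)_n}(-1)^nq^{n^2}=\frac{(kq^2;q^2)_\infty(q;q)_\infty}{(-kq;q^2)_\infty(q^4;q^4)_\infty},\\ \sum_{n\ge0}\frac{(1-kq^{4n})(k;q)_{2n}}{(1-k)(q;q)_{2n}}q^{2n^2-n}=\frac{(kq^2;q^2)_\infty}{(q;q^2)_\infty},\\ \sum_{n\ge0}\frac{(1-kq^{4n})(-q;q^2)_n(k;q)_{2n}}{(1-k)(-kq;q^2)_n(q;q)_{2n}}q^{n^2-n}=\frac{(kq^2,-1;q^2)_\infty}{(-kq,q;q^2)_\infty}.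 \end{gather*}
   Context: Notation: $(x;q)_n=\prod_{i=0}^{n-1}(1-xq^i)$, $(x;q)_\infty=\prod_{i\ge0}(1-xq^i)$, and $(x_1,\dots,x_j;q)_n=(x_1;q)_n\cdots(x_j;q)_n$ (also for $n=\infty$). *)

theory Defs
  imports "HOL-Analysis.Analysis"
begin

definition qpoch :: "complex \<Rightarrow> complex \<Rightarrow> nat \<Rightarrow> complex" where
  "qpoch x q n = (\<Prod>i<n. 1 - x * q ^ i)"

definition qpoch_inf :: "complex \<Rightarrow> complex \<Rightarrow> complex" where
  "qpoch_inf x q = lim (\<lambda>n. qpoch x q n)"

end

theory Submission
  imports Defs
begin

(* All seven identities are specialisations of one summation,
     sum_n (1 - a q^2n) (a;q)_n / ((1 - a) (q;q)_n)
           * prod_(i<n) (U - a q^i) (C - q^i) (-q^(i+1)) / ((Uq;q)_n (aCq;q)_n)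
       = (aq, UCq; q)_inf / (Uq, aCq; q)_inf,
   the limit d -> infinity of Rogers' very-well-poised 6phi5 sum with b = a/U and c = 1/C
   (so that U = 0 and C = 0 stand for b = infinity and c = infinity), taken with base q or q^2.
   Writing S(a, U) for the left-hand side, the terms telescope in a way that gives
     (1 - Uq) (1 - aCq) S(a, U) = (1 - aq) (1 - UCq) S(aq, Uq).
   Iterating m times and letting m -> infinity gives the product, because S(a q^m, U q^m) -> 1
   by Tannery's theorem: uniformly in m the terms are dominated by K^n |q|^(n(n+1)/2).
   The base-q^2 instances use the parameters 1/q or -1/q; for q = 0 those series are finite
   and are summed directly. *)

section \<open>q-Pochhammer symbols\<close>

lemma qpoch_0 [simp]: "qpoch x q 0 = 1"
  by (simp add: qpoch_def)

lemma qpoch_Suc: "qpoch x q (Suc n) = qpoch x q n * (1 - x * q ^ n)"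
  by (simp add: qpoch_def)

lemma qpoch_Suc_left: "qpoch x q (Suc n) = (1 - x) * qpoch (x * q) q n"
  unfolding qpoch_def prod.lessThan_Suc_shift by (simp add: mult.assoc)

lemma qpoch_add: "qpoch x q (m + n) = qpoch x q m * qpoch (x * q ^ m) q n"
  by (induction n) (simp_all add: qpoch_Suc power_add mult_ac)

lemma qpoch_base_0 [simp]: "qpoch 0 q n = 1"
  by (simp add: qpoch_def)

lemma qpoch_q_0: "qpoch x 0 n = (if n = 0 then 1 else 1 - x)"
  by (cases n) (simp_all add: qpoch_Suc_left)

lemma qpoch_mult_minus: "qpoch x q n * qpoch (-x) q n = qpoch (x\<^sup>2) (q\<^sup>2) n"
  unfolding qpoch_def prod.distrib[symmetric]
  by (rule prod.cong) (simp_all add: power2_eq_square power_mult_distrib algebra_simps)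

lemma qpoch_double: "qpoch x q (2 * n) = qpoch x (q\<^sup>2) n * qpoch (x * q) (q\<^sup>2) n"
  by (induction n) (simp_all add: qpoch_Suc power_mult[symmetric] mult_ac)

lemma qpoch_nonzero_iff: "(\<forall>n. qpoch x q n \<noteq> 0) \<longleftrightarrow> (\<forall>i. x * q ^ i \<noteq> 1)"
proof
  assume "\<forall>n. qpoch x q n \<noteq> 0"
  then show "\<forall>i. x * q ^ i \<noteq> 1"
    by (metis qpoch_Suc mult_eq_0_iff right_minus_eq)
qed (simp add: qpoch_def)

lemma qpoch_nonzero_shift:
  assumes "\<forall>n. qpoch x q n \<noteq> 0"
  shows "qpoch (x * q ^ m) q n \<noteq> 0"
  using assms qpoch_add[of x q m n] by (metis mult_eq_0_iff)

lemma norm_mult_power_le: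
  fixes z q :: complex
  assumes "norm q \<le> 1"
  shows "norm (z * q ^ k) \<le> norm z"
  using assms by (simp add: norm_mult norm_power mult_left_le power_le_one)

lemma qpoch_nonzero:
  fixes x q :: complex
  assumes "norm x < 1" and "norm q \<le> 1"
  shows "qpoch x q n \<noteq> 0"
proof -
  have "norm (x * q ^ i) < 1" for i
    using assms norm_mult_power_le[of q x i] by simp
  then have "1 - x * q ^ i \<noteq> 0" for i
    by (metis norm_one less_irrefl right_minus_eq)
  then show ?thesis
    by (simp add: qpoch_def)
qed

lemma qpoch_self_nonzero:
  fixes q :: complex
  assumes "norm q < 1"
  shows "qpoch q q n \<noteq> 0"
  using assms by (intro qpoch_nonzero) auto

lemma norm_qpoch_le:
  fixes x q :: complex
  assumes "norm x \<le> \<alpha>" and "norm q \<le> 1"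
  shows "norm (qpoch x q n) \<le> (1 + \<alpha>) ^ n"
proof -
  have "norm (1 - x * q ^ i) \<le> 1 + \<alpha>" for i
    using norm_triangle_ineq4[of 1 "x * q ^ i"] norm_mult_power_le[OF assms(2), of x i] assms(1)
    by simp
  then have "(\<Prod>i<n. norm (1 - x * q ^ i)) \<le> (\<Prod>i<n. 1 + \<alpha>)"
    by (intro prod_mono) auto
  then show ?thesis
    by (simp add: qpoch_def prod_norm)
qed

lemma qpoch_shift_lower_bound:
  fixes x q :: complex
  assumes q: "norm q < 1" and x: "\<forall>n. qpoch x q n \<noteq> 0"
  shows "\<exists>\<delta>>0. \<forall>m n. \<delta> ^ n \<le> norm (qpoch (x * q ^ m) q n)"
proof -
  have "(\<lambda>i. x * q ^ i) \<longlonglongrightarrow> 0"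
    using q by (intro tendsto_mult_right_zero LIMSEQ_power_zero) simp
  then have "(\<lambda>i. inverse (1 - x * q ^ i)) \<longlonglongrightarrow> inverse (1 - 0)"
    by (intro tendsto_inverse tendsto_diff tendsto_const) simp_all
  then have "Bseq (\<lambda>i. inverse (1 - x * q ^ i))"
    by (rule convergent_imp_Bseq[OF convergentI])
  then obtain B where B: "B > 0" "\<And>i. norm (inverse (1 - x * q ^ i)) \<le> B"
    unfolding Bseq_def by auto
  have factor: "1 / B \<le> norm (1 - x * q ^ i)" for i
  proof -
    have "0 < norm (1 - x * q ^ i)"
      using x qpoch_nonzero_iff by auto
    then show ?thesis
      using B(2)[of i] B(1) by (simp add: norm_inverse norm_divide field_simps)
  qed
  have "(1 / B) ^ n \<le> norm (qpoch (x * q ^ m) q n)" for m n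
  proof -
    have "(1 / B) ^ n = (\<Prod>i<n. 1 / B)" by simp
    also have "\<dots> \<le> (\<Prod>i<n. norm (1 - x * q ^ (m + i)))"
      using B(1) factor by (intro prod_mono) auto
    also have "\<dots> = norm (qpoch (x * q ^ m) q n)"
      by (simp add: qpoch_def prod_norm power_add mult.assoc)
    finally show ?thesis .
  qed
  then show ?thesis
    using B(1) by (intro exI[of _ "1 / B"]) simp
qed

lemma tendsto_qpoch:
  fixes f :: "nat \<Rightarrow> complex"
  assumes "f \<longlonglongrightarrow> x"
  shows "(\<lambda>m. qpoch (f m) q n) \<longlonglongrightarrow> qpoch x q n"
  unfolding qpoch_def by (intro tendsto_intros assms)

lemma qpoch_has_prod:
  fixes x q :: complex
  assumes "norm q < 1"
  shows "(\<lambda>i. 1 - x * q ^ i) has_prod qpoch_inf x q"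
proof -
  have "summable (\<lambda>i. norm ((1 - x * q ^ i) - 1))"
    using assms by (simp add: norm_mult norm_power summable_mult)
  then have "convergent_prod (\<lambda>i. 1 - x * q ^ i)"
    by (intro abs_convergent_prod_imp_convergent_prod summable_imp_abs_convergent_prod)
  then have "(\<lambda>i. 1 - x * q ^ i) has_prod prodinf (\<lambda>i. 1 - x * q ^ i)"
    by (rule convergent_prod_has_prod)
  moreover from this have "qpoch_inf x q = prodinf (\<lambda>i. 1 - x * q ^ i)"
    unfolding qpoch_inf_def qpoch_def by (rule limI[OF has_prod_imp_tendsto'])
  ultimately show ?thesis by simp
qed

lemma LIMSEQ_qpoch:
  fixes x q :: complex
  assumes "norm q < 1"
  shows "(\<lambda>n. qpoch x q n) \<longlonglongrightarrow> qpoch_inf x q"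
  unfolding qpoch_def using has_prod_imp_tendsto'[OF qpoch_has_prod[OF assms]] .

lemma qpoch_inf_nonzero:
  fixes x q :: complex
  assumes "norm q < 1" and "\<forall>n. qpoch x q n \<noteq> 0"
  shows "qpoch_inf x q \<noteq> 0"
proof -
  have "1 - x * q ^ i \<noteq> 0" for i
    using assms(2) qpoch_nonzero_iff by auto
  then show ?thesis
    using has_prod_eq_0_iff[OF qpoch_has_prod[OF assms(1), of x]] by auto
qed

lemma qpoch_inf_base_0 [simp]: "qpoch_inf 0 q = 1"
  by (simp add: qpoch_inf_def)

lemma qpoch_inf_q_0: "qpoch_inf x 0 = 1 - x"
proof -
  have "(\<lambda>n. qpoch x 0 (n + 1)) \<longlonglongrightarrow> 1 - x"
    by (simp add: qpoch_q_0)
  then show ?thesis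
    unfolding qpoch_inf_def by (rule limI[OF LIMSEQ_offset[where k = 1]])
qed

lemma qpoch_inf_mult_minus:
  fixes x q :: complex
  assumes "norm q < 1"
  shows "qpoch_inf x q * qpoch_inf (-x) q = qpoch_inf (x\<^sup>2) (q\<^sup>2)"
proof (rule LIMSEQ_unique)
  show "(\<lambda>n. qpoch x q n * qpoch (-x) q n) \<longlonglongrightarrow> qpoch_inf x q * qpoch_inf (-x) q"
    using assms by (intro tendsto_mult LIMSEQ_qpoch)
  have "norm (q\<^sup>2) < 1"
    using assms by (simp add: norm_power power_less_one_iff)
  then show "(\<lambda>n. qpoch x q n * qpoch (-x) q n) \<longlonglongrightarrow> qpoch_inf (x\<^sup>2) (q\<^sup>2)"
    unfolding qpoch_mult_minus by (rule LIMSEQ_qpoch)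
qed

lemma qpoch_inf_split_even_odd:
  fixes x q :: complex
  assumes "norm q < 1"
  shows "qpoch_inf x (q\<^sup>2) * qpoch_inf (x * q) (q\<^sup>2) = qpoch_inf x q"
proof (rule LIMSEQ_unique)
  have "norm (q\<^sup>2) < 1"
    using assms by (simp add: norm_power power_less_one_iff)
  then show "(\<lambda>n. qpoch x q (2 * n)) \<longlonglongrightarrow> qpoch_inf x (q\<^sup>2) * qpoch_inf (x * q) (q\<^sup>2)"
    unfolding qpoch_double by (intro tendsto_mult LIMSEQ_qpoch)
  have "strict_mono (\<lambda>n::nat. 2 * n)"
    by (rule strict_monoI) simp
  then show "(\<lambda>n. qpoch x q (2 * n)) \<longlonglongrightarrow> qpoch_inf x q"
    using LIMSEQ_subseq_LIMSEQ[OF LIMSEQ_qpoch[OF assms]] by (simp add: o_def)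
qed

lemma euler_odd_distinct:
  fixes q :: complex
  assumes "norm q < 1"
  shows "qpoch_inf q (q\<^sup>2) * qpoch_inf (-q) q = 1"
proof -
  have "norm (q\<^sup>2) < 1"
    using assms by (simp add: norm_power power_less_one_iff)
  then have "qpoch_inf (q\<^sup>2) (q\<^sup>2) \<noteq> 0"
    by (intro qpoch_inf_nonzero qpoch_nonzero allI) auto
  moreover have "qpoch_inf q (q\<^sup>2) * qpoch_inf (-q) q * qpoch_inf (q\<^sup>2) (q\<^sup>2) = qpoch_inf (q\<^sup>2) (q\<^sup>2)"
    using qpoch_inf_split_even_odd[OF assms, of q] qpoch_inf_mult_minus[OF assms, of q]
    by (simp add: power2_eq_square mult_ac)
  ultimately show ?thesis
    by simp
qed

lemma qpoch_inf_odd_mult_fourth: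
  fixes q :: complex
  assumes "norm q < 1"
  shows "qpoch_inf q (q\<^sup>2) * qpoch_inf (q ^ 4) (q ^ 4) = qpoch_inf q q * qpoch_inf (-(q\<^sup>2)) (q\<^sup>2)"
proof -
  have "norm (q\<^sup>2) < 1"
    using assms by (simp add: norm_power power_less_one_iff)
  then have "qpoch_inf (q\<^sup>2) (q\<^sup>2) * qpoch_inf (-(q\<^sup>2)) (q\<^sup>2) = qpoch_inf (q ^ 4) (q ^ 4)"
    using qpoch_inf_mult_minus[of "q\<^sup>2" "q\<^sup>2"] by (simp flip: power_mult)
  moreover have "qpoch_inf q (q\<^sup>2) * qpoch_inf (q\<^sup>2) (q\<^sup>2) = qpoch_inf q q"
    using qpoch_inf_split_even_odd[OF assms, of q] by (simp only: power2_eq_square[symmetric])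
  ultimately show ?thesis
    by (metis mult.assoc)
qed

section \<open>A very-well-poised summation\<close>

text \<open>\<open>wp_term q a U C n\<close> is the \<open>n\<close>-th term of the series in the header. The factor
  \<open>(a;q)\<^sub>n / (1 - a)\<close> is written as \<open>qpoch (a * q) q (n - 1)\<close> so that \<open>a = 1\<close> is allowed;
  since \<open>n - 1\<close> truncates, the case \<open>n = 0\<close> is separate in \<open>wp_term\<close>, while in \<open>wp_tail\<close>
  the factor \<open>1 - q ^ n\<close> makes it vanish.\<close>

definition wp_num :: "complex \<Rightarrow> complex \<Rightarrow> complex \<Rightarrow> complex \<Rightarrow> nat \<Rightarrow> complex" where
  "wp_num q a U C n = (\<Prod>i<n. (U - a * q ^ i) * (C - q ^ i) * - (q ^ Suc i))"

definition wp_core :: "complex \<Rightarrow> complex \<Rightarrow> complex \<Rightarrow> complex \<Rightarrow> nat \<Rightarrow> complex" where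
  "wp_core q a U C n = qpoch (a * q) q (n - 1) * wp_num q a U C n
     / (qpoch q q n * qpoch (U * q) q n * qpoch (a * C * q) q n)"

definition wp_term :: "complex \<Rightarrow> complex \<Rightarrow> complex \<Rightarrow> complex \<Rightarrow> nat \<Rightarrow> complex" where
  "wp_term q a U C n = (if n = 0 then 1 else (1 - a * q ^ (2 * n)) * wp_core q a U C n)"

definition wp_tail :: "complex \<Rightarrow> complex \<Rightarrow> complex \<Rightarrow> complex \<Rightarrow> nat \<Rightarrow> complex" where
  "wp_tail q a U C n = (1 - U * q) * (1 - a * C * q) * (1 - q ^ n) * wp_core q a U C n"

lemma wp_term_eq:
  fixes q a U C :: complex
  assumes "a \<noteq> 1"
  shows "wp_term q a U C n = (1 - a * q ^ (2 * n)) * qpoch a q n / ((1 - a) * qpoch q q n)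
           * wp_num q a U C n / (qpoch (U * q) q n * qpoch (a * C * q) q n)"
proof (cases n)
  case (Suc m)
  then show ?thesis
    using assms by (simp add: wp_term_def wp_core_def qpoch_Suc_left mult_ac)
qed (use assms in \<open>simp add: wp_term_def wp_num_def\<close>)

lemma wp_num_Suc:
  "wp_num q a U C (Suc n) = wp_num q a U C n * ((U - a * q ^ n) * (C - q ^ n) * - (q ^ Suc n))"
  by (simp add: wp_num_def)

lemma wp_num_shift: "wp_num q (a * q) (U * q) C n = q ^ n * wp_num q a U C n"
proof -
  have "wp_num q (a * q) (U * q) C n = (\<Prod>i<n. q * ((U - a * q ^ i) * (C - q ^ i) * - (q ^ Suc i)))"
    unfolding wp_num_def by (intro prod.cong) (simp_all add: algebra_simps)
  also have "\<dots> = q ^ n * wp_num q a U C n"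
    by (simp only: prod.distrib prod_constant card_lessThan wp_num_def)
  finally show ?thesis .
qed

lemma qpoch_pred_Suc:
  assumes "0 < n"
  shows "qpoch (a * q) q (Suc n - 1) = qpoch (a * q) q (n - 1) * (1 - a * q ^ n)"
  using assms by (cases n) (simp_all add: qpoch_Suc mult_ac)

lemma wp_core_Suc:
  assumes "0 < n" and "x = q ^ n"
    and "qpoch q q (Suc n) \<noteq> 0" "qpoch (U * q) q (Suc n) \<noteq> 0" "qpoch (a * C * q) q (Suc n) \<noteq> 0"
  shows "wp_core q a U C (Suc n) * ((1 - q * x) * (1 - U * q * x) * (1 - a * C * q * x))
       = wp_core q a U C n * ((1 - a * x) * (U - a * x) * (C - x) * - (q * x))"
proof -
  define A N Q PU PC dq dU dC where
    "A = qpoch (a * q) q (n - 1)" and "N = wp_num q a U C n" and "Q = qpoch q q n"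
    and "PU = qpoch (U * q) q n" and "PC = qpoch (a * C * q) q n"
    and "dq = 1 - q * x" and "dU = 1 - U * q * x" and "dC = 1 - a * C * q * x"
  have "Q \<noteq> 0" "PU \<noteq> 0" "PC \<noteq> 0" "dq \<noteq> 0" "dU \<noteq> 0" "dC \<noteq> 0"
    using assms(3-5) unfolding Q_def PU_def PC_def dq_def dU_def dC_def qpoch_Suc assms(2)
    by (simp_all add: mult_ac)
  moreover have core_Suc: "wp_core q a U C (Suc n)
      = A * (1 - a * x) * (N * ((U - a * x) * (C - x) * - (q * x))) / ((Q * dq) * (PU * dU) * (PC * dC))"
    unfolding wp_core_def qpoch_pred_Suc[OF assms(1)] wp_num_Suc qpoch_Suc
    by (simp add: A_def N_def Q_def PU_def PC_def dq_def dU_def dC_def assms(2) mult_ac)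
  moreover have core: "wp_core q a U C n = A * N / (Q * PU * PC)"
    by (simp add: wp_core_def A_def N_def Q_def PU_def PC_def)
  ultimately show ?thesis
    unfolding core_Suc core dq_def[symmetric] dU_def[symmetric] dC_def[symmetric]
    by (simp add: field_simps)
qed

lemma wp_core_shift:
  assumes "0 < n" and "x = q ^ n"
    and "qpoch q q n \<noteq> 0" "qpoch (U * q) q (Suc n) \<noteq> 0" "qpoch (a * C * q) q (Suc n) \<noteq> 0"
  shows "wp_core q (a * q) (U * q) C n * ((1 - a * q) * (1 - U * q * x) * (1 - a * C * q * x))
       = wp_core q a U C n * (x * (1 - a * x) * (1 - U * q) * (1 - a * C * q))"
proof -
  define A N Q PU PC PU' PC' where
    "A = qpoch (a * q) q (n - 1)" and "N = wp_num q a U C n" and "Q = qpoch q q n"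
    and "PU = qpoch (U * q) q n" and "PC = qpoch (a * C * q) q n"
    and "PU' = qpoch (U * q * q) q n" and "PC' = qpoch (a * q * C * q) q n"
  have A: "(1 - a * q) * qpoch (a * q * q) q (n - 1) = A * (1 - a * x)"
    using qpoch_Suc_left[of "a * q" q "n - 1"] qpoch_pred_Suc[OF assms(1), of a q]
    by (simp add: A_def assms(1,2))
  have PU: "PU * (1 - U * q * x) = (1 - U * q) * PU'"
    and PC: "PC * (1 - a * C * q * x) = (1 - a * C * q) * PC'"
    using qpoch_Suc[of "U * q" q n] qpoch_Suc_left[of "U * q" q n]
      qpoch_Suc[of "a * C * q" q n] qpoch_Suc_left[of "a * C * q" q n]
    by (simp_all add: PU_def PU'_def PC_def PC'_def assms(2) mult_ac)
  have "Q \<noteq> 0" "PU' \<noteq> 0" "PC' \<noteq> 0"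
    using assms(3-5) unfolding Q_def PU'_def PC'_def qpoch_Suc_left
    by (simp_all add: mult_ac)
  moreover have "PU \<noteq> 0" "PC \<noteq> 0"
    using assms(4,5) unfolding PU_def PC_def qpoch_Suc by simp_all
  moreover have core_shift: "wp_core q (a * q) (U * q) C n * ((1 - a * q) * (1 - U * q * x) * (1 - a * C * q * x))
      = x * N * ((1 - a * q) * qpoch (a * q * q) q (n - 1)) * (PU * (1 - U * q * x)) * (PC * (1 - a * C * q * x))
        / (Q * PU * PU' * PC * PC')"
    using calculation
    by (simp add: wp_core_def wp_num_shift N_def Q_def PU_def PU'_def PC_def PC'_def assms(2) field_simps)
  moreover have core: "wp_core q a U C n = A * N / (Q * PU * PC)"
    by (simp add: wp_core_def A_def N_def Q_def PU_def PC_def)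
  ultimately show ?thesis
    unfolding core_shift core A PU PC by (simp add: field_simps)
qed

lemma wp_term_telescoping:
  fixes q a U C :: complex
  assumes q: "norm q < 1"
    and U: "\<forall>n. qpoch (U * q) q n \<noteq> 0" and aC: "\<forall>n. qpoch (a * C * q) q n \<noteq> 0"
  shows "(1 - U * q) * (1 - a * C * q) * wp_term q a U C n
           - (1 - a * q) * (1 - U * C * q) * wp_term q (a * q) (U * q) C n
         = wp_tail q a U C n - wp_tail q a U C (Suc n)"
proof (cases "n = 0")
  case True
  have "qpoch q q 1 \<noteq> 0" "qpoch (U * q) q 1 \<noteq> 0" "qpoch (a * C * q) q 1 \<noteq> 0"
    using qpoch_self_nonzero[OF q] U aC by blast+
  then have "wp_tail q a U C 1 = (U - a) * (C - 1) * - q"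
    by (simp add: wp_tail_def wp_core_def wp_num_def qpoch_def)
  then show ?thesis
    using True by (simp add: wp_term_def wp_tail_def algebra_simps)
next
  case False
  define x where "x = q ^ n"
  have "qpoch q q n \<noteq> 0" "qpoch q q (Suc n) \<noteq> 0"
    using q by (simp_all add: qpoch_self_nonzero)
  then have core_Suc: "wp_core q a U C (Suc n) * ((1 - q * x) * (1 - U * q * x) * (1 - a * C * q * x))
       = wp_core q a U C n * ((1 - a * x) * (U - a * x) * (C - x) * - (q * x))"
    and core_shift: "wp_core q (a * q) (U * q) C n * ((1 - a * q) * (1 - U * q * x) * (1 - a * C * q * x))
       = wp_core q a U C n * (x * (1 - a * x) * (1 - U * q) * (1 - a * C * q))"
    using False U aC by (simp_all add: wp_core_Suc wp_core_shift x_def)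
  have "(1 - U * q * x) * (1 - a * C * q * x) \<noteq> 0"
    using U aC by (force simp: x_def qpoch_Suc mult_ac dest: spec[of _ "Suc n"])
  \<comment> \<open>after cancelling \<open>(1 - U q) (1 - a C q) wp_core q a U C n\<close> this is the polynomial identity
     \<open>(1 - a x\<^sup>2) d - (1 - U C q) (1 - a q x\<^sup>2) (1 - a x) x = (1 - x) d + (1 - a x) (U - a x) (C - x) q x\<close>
     with \<open>d = (1 - U q x) (1 - a C q x)\<close>\<close>
  then have "(1 - U * q) * (1 - a * C * q) * ((1 - a * x\<^sup>2) * wp_core q a U C n)
      - (1 - a * q) * (1 - U * C * q) * ((1 - a * q * x\<^sup>2) * wp_core q (a * q) (U * q) C n)
    = (1 - U * q) * (1 - a * C * q) * (1 - x) * wp_core q a U C n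
      - (1 - U * q) * (1 - a * C * q) * (1 - q * x) * wp_core q a U C (Suc n)"
    using core_Suc core_shift by algebra
  moreover have "q ^ (2 * n) = x\<^sup>2" "q ^ Suc n = q * x"
    by (simp_all add: x_def power_mult[symmetric] mult.commute)
  ultimately show ?thesis
    using False by (simp add: wp_term_def wp_tail_def x_def)
qed

lemma norm_wp_num_le:
  fixes q a U C :: complex
  assumes "norm a \<le> \<alpha>" "norm U \<le> \<beta>" and "norm q \<le> 1"
  shows "norm (wp_num q a U C n) \<le> (\<Prod>i<n. (\<beta> + \<alpha>) * (norm C + 1) * norm q ^ Suc i)"
proof -
  have "norm ((U - a * q ^ i) * (C - q ^ i) * - (q ^ Suc i)) \<le> (\<beta> + \<alpha>) * (norm C + 1) * norm q ^ Suc i" for i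
  proof -
    have "norm (U - a * q ^ i) \<le> \<beta> + \<alpha>"
      using norm_triangle_ineq4[of U "a * q ^ i"] norm_mult_power_le[OF assms(3), of a i] assms(1,2)
      by simp
    moreover have "norm (C - q ^ i) \<le> norm C + 1"
      using norm_triangle_ineq4[of C "q ^ i"] norm_mult_power_le[OF assms(3), of 1 i] by simp
    moreover have "0 \<le> \<beta> + \<alpha>"
      using assms(1,2) by (meson add_nonneg_nonneg norm_ge_zero order_trans)
    ultimately show ?thesis
      unfolding norm_mult norm_minus_cancel norm_power
      by (intro mult_right_mono mult_mono) auto
  qed
  then show ?thesis
    unfolding wp_num_def prod_norm[symmetric] by (intro prod_mono) auto
qed

lemma norm_wp_term_le:
  fixes q a U C :: complex
  assumes q: "norm q \<le> 1" and a: "norm a \<le> \<alpha>" and U: "norm U \<le> \<beta>" and "\<delta> > 0"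
    and den: "\<delta> ^ n \<le> norm (qpoch q q n * qpoch (U * q) q n * qpoch (a * C * q) q n)"
  shows "norm (wp_term q a U C n) \<le> (\<Prod>i<n. (1 + \<alpha>) * ((\<beta> + \<alpha>) * (norm C + 1)) / \<delta> * norm q ^ Suc i)"
proof (cases "n = 0")
  case True
  then show ?thesis by (simp add: wp_term_def)
next
  case False
  define L where "L = (\<beta> + \<alpha>) * (norm C + 1)"
  have "0 \<le> \<alpha>" "0 \<le> \<beta>"
    using a U by (meson norm_ge_zero order_trans)+
  have "norm (1 - a * q ^ (2 * n)) \<le> 1 + \<alpha>"
    using norm_triangle_ineq4[of 1 "a * q ^ (2 * n)"] norm_mult_power_le[OF q, of a "2 * n"] a by simp
  moreover have "norm (qpoch (a * q) q (n - 1)) \<le> (1 + \<alpha>) ^ (n - 1)"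
    using a norm_mult_power_le[OF q, of a 1] by (intro norm_qpoch_le q) simp
  ultimately have "norm (1 - a * q ^ (2 * n)) * norm (qpoch (a * q) q (n - 1)) \<le> (1 + \<alpha>) * (1 + \<alpha>) ^ (n - 1)"
    by (rule mult_mono) (simp_all add: \<open>0 \<le> \<alpha>\<close>)
  also have "\<dots> = (1 + \<alpha>) ^ n"
    using False by (simp add: power_eq_if)
  finally have lead: "norm (1 - a * q ^ (2 * n)) * norm (qpoch (a * q) q (n - 1)) \<le> (1 + \<alpha>) ^ n" .
  have "norm (wp_term q a U C n)
      = norm (1 - a * q ^ (2 * n)) * norm (qpoch (a * q) q (n - 1)) * norm (wp_num q a U C n)
        / norm (qpoch q q n * qpoch (U * q) q n * qpoch (a * C * q) q n)"
    using False by (simp add: wp_term_def wp_core_def norm_mult norm_divide)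
  also have "\<dots> \<le> (1 + \<alpha>) ^ n * (\<Prod>i<n. L * norm q ^ Suc i) / \<delta> ^ n"
    using lead norm_wp_num_le[OF a U q] den \<open>\<delta> > 0\<close> \<open>0 \<le> \<alpha>\<close> \<open>0 \<le> \<beta>\<close> unfolding L_def
    by (intro frac_le mult_mono mult_nonneg_nonneg prod_nonneg zero_le_power) auto
  also have "\<dots> = (\<Prod>i<n. (1 + \<alpha>) * L / \<delta> * norm q ^ Suc i)"
    unfolding prod.distrib prod_constant card_lessThan by (simp add: power_divide power_mult_distrib)
  finally show ?thesis
    unfolding L_def .
qed

lemma norm_wp_term_shift_le:
  fixes q a U C :: complex
  assumes q: "norm q < 1"
    and U: "\<forall>n. qpoch (U * q) q n \<noteq> 0" and aC: "\<forall>n. qpoch (a * C * q) q n \<noteq> 0"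
  obtains K where "\<And>m n. norm (wp_term q (a * q ^ m) (U * q ^ m) C n) \<le> (\<Prod>i<n. K * norm q ^ Suc i)"
proof -
  obtain \<delta>1 where \<delta>1: "\<delta>1 > 0" "\<And>m n. \<delta>1 ^ n \<le> norm (qpoch (q * q ^ m) q n)"
    using qpoch_shift_lower_bound[OF q, of q] qpoch_self_nonzero[OF q] by blast
  obtain \<delta>2 where \<delta>2: "\<delta>2 > 0" "\<And>m n. \<delta>2 ^ n \<le> norm (qpoch (U * q * q ^ m) q n)"
    using qpoch_shift_lower_bound[OF q U] by blast
  obtain \<delta>3 where \<delta>3: "\<delta>3 > 0" "\<And>m n. \<delta>3 ^ n \<le> norm (qpoch (a * C * q * q ^ m) q n)"
    using qpoch_shift_lower_bound[OF q aC] by blast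
  have "norm (wp_term q (a * q ^ m) (U * q ^ m) C n)
      \<le> (\<Prod>i<n. (1 + norm a) * ((norm U + norm a) * (norm C + 1)) / (\<delta>1 * \<delta>2 * \<delta>3) * norm q ^ Suc i)"
    for m n
  proof (rule norm_wp_term_le)
    show "norm q \<le> 1" "norm (a * q ^ m) \<le> norm a" "norm (U * q ^ m) \<le> norm U"
      using q by (simp_all add: norm_mult_power_le)
    show "\<delta>1 * \<delta>2 * \<delta>3 > 0"
      using \<delta>1 \<delta>2 \<delta>3 by simp
    have "\<delta>1 ^ n \<le> norm (qpoch q q n)" "\<delta>2 ^ n \<le> norm (qpoch (U * q ^ m * q) q n)"
      "\<delta>3 ^ n \<le> norm (qpoch (a * q ^ m * C * q) q n)"
      using \<delta>1(2)[where m = 0 and n = n] \<delta>2(2)[where m = m and n = n] \<delta>3(2)[where m = m and n = n]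
      by (simp_all add: mult_ac)
    then show "(\<delta>1 * \<delta>2 * \<delta>3) ^ n
        \<le> norm (qpoch q q n * qpoch (U * q ^ m * q) q n * qpoch (a * q ^ m * C * q) q n)"
      using \<delta>1(1) \<delta>2(1) \<delta>3(1) unfolding power_mult_distrib norm_mult
      by (intro mult_mono) simp_all
  qed
  then show ?thesis by (rule that)
qed

lemma summable_prod_tendsto_0:
  fixes r :: "nat \<Rightarrow> real"
  assumes "r \<longlonglongrightarrow> 0"
  shows "summable (\<lambda>n. \<Prod>i<n. r i)"
proof -
  have "eventually (\<lambda>n. norm (r n) < 1/2) sequentially"
    using tendsto_norm_zero[OF assms] by (rule order_tendstoD) simp
  then obtain N where N: "\<And>n. n \<ge> N \<Longrightarrow> norm (r n) \<le> 1/2"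
    unfolding eventually_sequentially by (meson less_imp_le)
  show ?thesis
  proof (rule summable_ratio_test[of "1/2" N])
    fix n assume "n \<ge> N"
    have "norm (\<Prod>i<Suc n. r i) = norm (r n) * norm (\<Prod>i<n. r i)"
      by (simp add: abs_mult)
    also have "\<dots> \<le> 1/2 * norm (\<Prod>i<n. r i)"
      using N[OF \<open>n \<ge> N\<close>] by (rule mult_right_mono) simp
    finally show "norm (\<Prod>i<Suc n. r i) \<le> 1/2 * norm (\<Prod>i<n. r i)" .
  qed simp
qed

lemma summable_prod_const_mult_power:
  fixes q :: complex
  assumes "norm q < 1"
  shows "summable (\<lambda>n. \<Prod>i<n. K * norm q ^ Suc i)"
proof (rule summable_prod_tendsto_0)
  have "(\<lambda>i. norm q ^ Suc i) \<longlonglongrightarrow> 0"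
    using LIMSEQ_Suc[OF LIMSEQ_power_zero[of "norm q"]] assms by simp
  then show "(\<lambda>i. K * norm q ^ Suc i) \<longlonglongrightarrow> 0"
    by (rule tendsto_mult_right_zero)
qed

lemma summable_wp_term:
  fixes q a U C :: complex
  assumes q: "norm q < 1"
    and U: "\<forall>n. qpoch (U * q) q n \<noteq> 0" and aC: "\<forall>n. qpoch (a * C * q) q n \<noteq> 0"
  shows "summable (wp_term q a U C)"
proof -
  obtain K where "\<And>n. norm (wp_term q (a * q ^ 0) (U * q ^ 0) C n) \<le> (\<Prod>i<n. K * norm q ^ Suc i)"
    using norm_wp_term_shift_le[OF assms] by metis
  then show ?thesis
    by (intro summable_comparison_test[OF _ summable_prod_const_mult_power[OF q]]) auto
qed

lemma wp_term_tendsto: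
  fixes q :: complex and f g :: "nat \<Rightarrow> complex"
  assumes q: "norm q < 1" and f: "f \<longlonglongrightarrow> 0" and g: "g \<longlonglongrightarrow> 0"
  shows "(\<lambda>m. wp_term q (f m) (g m) C n) \<longlonglongrightarrow> (if n = 0 then 1 else 0)"
proof (cases "n = 0")
  case False
  have "(\<lambda>m. (1 - f m * q ^ (2 * n)) * (qpoch (f m * q) q (n - 1) * wp_num q (f m) (g m) C n
      / (qpoch q q n * qpoch (g m * q) q n * qpoch (f m * C * q) q n)))
    \<longlonglongrightarrow> (1 - 0 * q ^ (2 * n)) * (qpoch (0 * q) q (n - 1) * wp_num q 0 0 C n
      / (qpoch q q n * qpoch (0 * q) q n * qpoch (0 * C * q) q n))"
    unfolding wp_num_def
    by (intro tendsto_intros tendsto_qpoch f g) (simp add: qpoch_self_nonzero[OF q])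
  moreover have "wp_num q 0 0 C n = 0"
    using False by (simp add: wp_num_def)
  ultimately show ?thesis
    using False by (simp add: wp_term_def wp_core_def)
qed (simp add: wp_term_def)

lemma wp_sum_shift_tendsto_1:
  fixes q a U C :: complex
  assumes q: "norm q < 1"
    and U: "\<forall>n. qpoch (U * q) q n \<noteq> 0" and aC: "\<forall>n. qpoch (a * C * q) q n \<noteq> 0"
  shows "(\<lambda>m. suminf (wp_term q (a * q ^ m) (U * q ^ m) C)) \<longlonglongrightarrow> 1"
proof -
  obtain K where K: "\<And>m n. norm (wp_term q (a * q ^ m) (U * q ^ m) C n) \<le> (\<Prod>i<n. K * norm q ^ Suc i)"
    using norm_wp_term_shift_le[OF assms] by blast
  have "(\<lambda>m. a * q ^ m) \<longlonglongrightarrow> 0" "(\<lambda>m. U * q ^ m) \<longlonglongrightarrow> 0"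
    using q by (simp_all add: tendsto_mult_right_zero LIMSEQ_power_zero)
  then have "(\<lambda>m. suminf (\<lambda>n. wp_term q (a * q ^ m) (U * q ^ m) C n))
      \<longlonglongrightarrow> suminf (\<lambda>n. if n = 0 then 1 else 0 :: complex)"
    using K summable_prod_const_mult_power[OF q]
    by (intro tannerys_theorem[THEN conjunct2, THEN conjunct2] wp_term_tendsto[OF q]
        always_eventually) auto
  moreover have "(\<lambda>n. if n = 0 then 1 else 0 :: complex) sums 1"
    using sums_single[of 0 "\<lambda>_. 1 :: complex"] by simp
  ultimately show ?thesis
    by (simp add: sums_iff)
qed

lemma wp_tail_tendsto_0:
  fixes q a U C :: complex
  assumes q: "norm q < 1" and sum: "summable (wp_term q a U C)"
  shows "wp_tail q a U C \<longlonglongrightarrow> 0"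
proof -
  define c where "c = (1 - U * q) * (1 - a * C * q)"
  have pow: "(\<lambda>n. q ^ n) \<longlonglongrightarrow> 0" "(\<lambda>n. q ^ (2 * n)) \<longlonglongrightarrow> 0"
    using q LIMSEQ_power_zero[of "q\<^sup>2"]
    by (simp_all add: LIMSEQ_power_zero power_mult norm_power power_less_one_iff)
  have "(\<lambda>n. c * (1 - q ^ n) * wp_term q a U C n / (1 - a * q ^ (2 * n)))
      \<longlonglongrightarrow> c * (1 - 0) * 0 / (1 - a * 0)"
    by (intro tendsto_intros pow summable_LIMSEQ_zero[OF sum]) simp
  moreover have "eventually (\<lambda>n. 1 - a * q ^ (2 * n) \<noteq> 0) sequentially"
  proof -
    have "(\<lambda>n. 1 - a * q ^ (2 * n)) \<longlonglongrightarrow> 1 - a * 0"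
      by (intro tendsto_intros pow)
    then show ?thesis
      by (rule tendsto_imp_eventually_ne) simp
  qed
  then have "eventually (\<lambda>n. c * (1 - q ^ n) * wp_term q a U C n / (1 - a * q ^ (2 * n))
      = wp_tail q a U C n) sequentially"
    by eventually_elim (simp add: wp_term_def wp_tail_def c_def)
  ultimately show ?thesis
    by (simp add: Lim_transform_eventually)
qed

lemma wp_sum_shift:
  fixes q a U C :: complex
  assumes q: "norm q < 1"
    and U: "\<forall>n. qpoch (U * q) q n \<noteq> 0" and aC: "\<forall>n. qpoch (a * C * q) q n \<noteq> 0"
  shows "(1 - U * q) * (1 - a * C * q) * suminf (wp_term q a U C)
       = (1 - a * q) * (1 - U * C * q) * suminf (wp_term q (a * q) (U * q) C)"
proof -
  have "qpoch (U * q * q) q n \<noteq> 0" "qpoch (a * q * C * q) q n \<noteq> 0" for n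
    using qpoch_nonzero_shift[OF U, of 1] qpoch_nonzero_shift[OF aC, of 1] by (simp_all add: mult_ac)
  then have sum: "summable (wp_term q a U C)" "summable (wp_term q (a * q) (U * q) C)"
    using summable_wp_term[OF q] U aC by blast+
  have "(\<lambda>n. (1 - U * q) * (1 - a * C * q) * wp_term q a U C n
        - (1 - a * q) * (1 - U * C * q) * wp_term q (a * q) (U * q) C n)
      sums ((1 - U * q) * (1 - a * C * q) * suminf (wp_term q a U C)
        - (1 - a * q) * (1 - U * C * q) * suminf (wp_term q (a * q) (U * q) C))"
    by (intro sums_diff sums_mult summable_sums sum)
  moreover have "(\<lambda>n. (1 - U * q) * (1 - a * C * q) * wp_term q a U C n
        - (1 - a * q) * (1 - U * C * q) * wp_term q (a * q) (U * q) C n) sums 0"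
    using telescope_sums'[OF wp_tail_tendsto_0[OF q sum(1)]]
    by (simp add: wp_term_telescoping[OF q U aC] wp_tail_def)
  ultimately show ?thesis
    using sums_unique2 by fastforce
qed

lemma wp_sum_shift_iter:
  fixes q a U C :: complex
  assumes q: "norm q < 1"
    and U: "\<forall>n. qpoch (U * q) q n \<noteq> 0" and aC: "\<forall>n. qpoch (a * C * q) q n \<noteq> 0"
  shows "suminf (wp_term q a U C) * (qpoch (U * q) q m * qpoch (a * C * q) q m)
       = qpoch (a * q) q m * qpoch (U * C * q) q m * suminf (wp_term q (a * q ^ m) (U * q ^ m) C)"
proof (induction m)
  case (Suc m)
  define S0 Sm S1 x where "S0 = suminf (wp_term q a U C)"
    and "Sm = suminf (wp_term q (a * q ^ m) (U * q ^ m) C)"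
    and "S1 = suminf (wp_term q (a * q ^ Suc m) (U * q ^ Suc m) C)" and "x = q ^ m"
  have "qpoch (U * q ^ m * q) q n \<noteq> 0" "qpoch (a * q ^ m * C * q) q n \<noteq> 0" for n
    using qpoch_nonzero_shift[OF U, of m] qpoch_nonzero_shift[OF aC, of m] by (simp_all add: mult_ac)
  then have "(1 - U * x * q) * (1 - a * x * C * q) * Sm = (1 - a * x * q) * (1 - U * x * C * q) * S1"
    using wp_sum_shift[OF q, where a = "a * q ^ m" and U = "U * q ^ m" and C = C]
    by (simp add: Sm_def S1_def x_def mult_ac)
  moreover have "S0 * (qpoch (U * q) q m * qpoch (a * C * q) q m) = qpoch (a * q) q m * qpoch (U * C * q) q m * Sm"
    using Suc.IH by (simp add: S0_def Sm_def)
  ultimately show ?case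
    unfolding qpoch_Suc S0_def[symmetric] S1_def[symmetric] x_def[symmetric] by algebra
qed simp

theorem wp_term_sums:
  fixes q a U C :: complex
  assumes q: "norm q < 1"
    and U: "\<forall>n. qpoch (U * q) q n \<noteq> 0" and aC: "\<forall>n. qpoch (a * C * q) q n \<noteq> 0"
  shows "wp_term q a U C sums
    (qpoch_inf (a * q) q * qpoch_inf (U * C * q) q / (qpoch_inf (U * q) q * qpoch_inf (a * C * q) q))"
proof -
  define S where "S = suminf (wp_term q a U C)"
  have "(\<lambda>m. S * (qpoch (U * q) q m * qpoch (a * C * q) q m))
      \<longlonglongrightarrow> S * (qpoch_inf (U * q) q * qpoch_inf (a * C * q) q)"
    by (intro tendsto_intros LIMSEQ_qpoch q)
  moreover have "(\<lambda>m. S * (qpoch (U * q) q m * qpoch (a * C * q) q m))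
      \<longlonglongrightarrow> qpoch_inf (a * q) q * qpoch_inf (U * C * q) q * 1"
    unfolding S_def wp_sum_shift_iter[OF assms]
    by (intro tendsto_intros LIMSEQ_qpoch q wp_sum_shift_tendsto_1[OF assms])
  ultimately have "S * (qpoch_inf (U * q) q * qpoch_inf (a * C * q) q)
      = qpoch_inf (a * q) q * qpoch_inf (U * C * q) q"
    using LIMSEQ_unique by fastforce
  moreover have "qpoch_inf (U * q) q \<noteq> 0" "qpoch_inf (a * C * q) q \<noteq> 0"
    using q U aC by (simp_all add: qpoch_inf_nonzero)
  ultimately have "S = qpoch_inf (a * q) q * qpoch_inf (U * C * q) q
      / (qpoch_inf (U * q) q * qpoch_inf (a * C * q) q)"
    by (simp add: eq_divide_eq)
  then show ?thesis
    using summable_sums[OF summable_wp_term[OF assms]] by (simp add: S_def)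
qed

corollary wp_sums:
  fixes q a U C :: complex
  assumes "norm q < 1" and "a \<noteq> 1"
    and "\<forall>n. qpoch (U * q) q n \<noteq> 0" and "\<forall>n. qpoch (a * C * q) q n \<noteq> 0"
  shows "(\<lambda>n. (1 - a * q ^ (2 * n)) * qpoch a q n / ((1 - a) * qpoch q q n)
           * wp_num q a U C n / (qpoch (U * q) q n * qpoch (a * C * q) q n))
    sums (qpoch_inf (a * q) q * qpoch_inf (U * C * q) q / (qpoch_inf (U * q) q * qpoch_inf (a * C * q) q))"
  using wp_term_sums[OF assms(1,3,4)] unfolding wp_term_eq[OF assms(2)] .

section \<open>The seven specialisations\<close>

lemma prod_factorwise:
  fixes f g :: "nat \<Rightarrow> 'a :: comm_monoid_mult"
  assumes "\<And>i. f i = c * g i * x ^ e i"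
  shows "(\<Prod>i<n. f i) = c ^ n * (\<Prod>i<n. g i) * x ^ (\<Sum>i<n. e i)"
  by (simp add: assms prod.distrib power_sum)

lemma power_linear: "x ^ (m * i + r) = (x ^ i) ^ m * x ^ r"
  for x :: "'a :: monoid_mult"
  by (simp add: power_add mult.commute flip: power_mult)

lemma power_square_base: "(x\<^sup>2) ^ i = (x ^ i)\<^sup>2"
  for x :: "'a :: monoid_mult"
  by (simp add: mult.commute flip: power_mult)

lemma sum_3i_plus_1: "(\<Sum>i<n. 3 * i + 1) = n * (3 * n - 1) div 2" for n :: nat
proof -
  have "2 * (\<Sum>i<n. 3 * i + 1) = n * (3 * n - 1)"
    by (induction n) (auto simp: algebra_simps)
  then show ?thesis by simp
qed

lemma sum_2i_plus_1: "(\<Sum>i<n. 2 * i + 1) = n\<^sup>2" for n :: nat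
  by (induction n) (simp_all add: power2_eq_square)

lemma sum_4i_plus_1: "(\<Sum>i<n. 4 * i + 1) = 2 * n\<^sup>2 - n" for n :: nat
  by (induction n) (simp_all add: power2_eq_square algebra_simps)

lemma sum_2i: "(\<Sum>i<n. 2 * i) = n\<^sup>2 - n" for n :: nat
  by (induction n) (simp_all add: power2_eq_square algebra_simps)

lemma sums_two_terms:
  assumes "\<And>n. 2 \<le> n \<Longrightarrow> f n = 0"
  shows "f sums (f 0 + f 1)"
proof -
  have "f sums (\<Sum>n\<in>{0, 1}. f n)"
    using assms by (intro sums_finite) auto
  then show ?thesis by simp
qed

lemma identity_1:
  fixes q k :: complex
  assumes q: "norm q < 1" and k: "k \<noteq> 1"
  shows "(\<lambda>n. (1 - k * q ^ (2*n)) * qpoch k q n / ((1 - k) * qpoch q q n)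
          * (-1) ^ n * k ^ n * q ^ (n * (3*n - 1) div 2))
      sums qpoch_inf (k*q) q"
proof -
  have "wp_num q k 0 0 n = (-k) ^ n * (\<Prod>i<n. 1) * q ^ (n * (3 * n - 1) div 2)" for n
    unfolding wp_num_def sum_3i_plus_1[symmetric] by (rule prod_factorwise) (unfold power_linear power_Suc, algebra)
  then show ?thesis
    using wp_sums[OF q k, of 0 0] by (simp add: power_minus[of k] mult.assoc)
qed

lemma identity_2:
  fixes q k :: complex
  assumes q: "norm q < 1" and k: "k \<noteq> 1" and kq: "\<forall>n. qpoch (-k*q) (q^2) n \<noteq> 0"
  shows "(\<lambda>n. (1 - k * q ^ (4*n)) * (qpoch (-q) (q^2) n * qpoch k (q^2) n)
          / ((1 - k) * (qpoch (-k*q) (q^2) n * qpoch (q^2) (q^2) n))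
          * (-1) ^ n * k ^ n * q ^ (2*n^2 - n))
      sums (qpoch_inf (k*q^2) (q^2) / qpoch_inf (-k*q) (q^2))" (is "?f sums ?R")
proof (cases "q = 0")
  case True
  have "?f sums (?f 0 + ?f 1)"
  proof (rule sums_two_terms)
    fix n :: nat assume "2 \<le> n"
    then have "2 * n\<^sup>2 - n \<noteq> 0"
      by (simp add: power2_eq_square)
    then show "?f n = 0"
      by (simp add: True)
  qed
  moreover have "?f 0 + ?f 1 = ?R"
    using k by (simp add: True qpoch_q_0 qpoch_inf_q_0)
  ultimately show ?thesis
    by simp
next
  case False
  define p where "p = q\<^sup>2"
  have p: "norm p < 1"
    using q by (simp add: p_def norm_power power_less_one_iff)
  have "wp_num p k (-k/q) 0 n = (-k) ^ n * qpoch (-q) p n * q ^ (2 * n\<^sup>2 - n)" for n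
    unfolding wp_num_def qpoch_def sum_4i_plus_1[symmetric] p_def
    by (rule prod_factorwise) (unfold power_linear power_square_base power_Suc, use False in \<open>simp add: field_simps\<close>, algebra)
  moreover have U: "-k/q * p = -k*q"
    using False by (simp add: p_def power2_eq_square)
  moreover have "p ^ (2 * n) = q ^ (4 * n)" for n
    by (simp add: p_def flip: power_mult)
  ultimately show ?thesis
    using wp_sums[OF p k, of "-k/q" 0, unfolded U] kq unfolding p_def[symmetric]
    by (simp add: power_minus[of k] divide_inverse inverse_mult_distrib mult_ac)
qed

lemma identity_3:
  fixes q k :: complex
  assumes q: "norm q < 1" and k: "k \<noteq> 1" and kq: "\<forall>n. qpoch (-k*q) q n \<noteq> 0"
  shows "(\<lambda>n. (1 - k * q ^ (2*n)) * (qpoch (-1) q n * qpoch k q n)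
          / ((1 - k) * (qpoch (-k*q) q n * qpoch q q n))
          * (-1) ^ n * k ^ n * q ^ (n^2))
      sums (qpoch_inf (k*q) q / qpoch_inf (-k*q) q)"
proof -
  have "wp_num q k (-k) 0 n = (-k) ^ n * qpoch (-1) q n * q ^ n\<^sup>2" for n
    unfolding wp_num_def qpoch_def sum_2i_plus_1[symmetric] by (rule prod_factorwise) (unfold power_linear power_Suc, algebra)
  then show ?thesis
    using wp_sums[OF q k, of "-k" 0] kq by (simp add: power_minus[of k] mult_ac)
qed

lemma identity_4:
  fixes q k :: complex
  assumes q: "norm q < 1" and k: "k \<noteq> 1"
  shows "(\<lambda>n. (1 - k * q ^ (2*n)) * qpoch (k^2) (q^2) n / ((1 - k) * qpoch (q^2) (q^2) n)
          * (-1) ^ n * q ^ (n^2))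
      sums (qpoch_inf (k*q) q * qpoch_inf q (q^2))"
proof -
  have "wp_num q k (-1) 0 n = (-1) ^ n * qpoch (-k) q n * q ^ n\<^sup>2" for n
    unfolding wp_num_def qpoch_def sum_2i_plus_1[symmetric]
    by (rule prod_factorwise) (unfold power_linear power_Suc, algebra)
  then have "(1 - k * q ^ (2 * n)) * qpoch k q n / ((1 - k) * qpoch q q n)
        * wp_num q k (-1) 0 n / (qpoch (-1 * q) q n * qpoch (k * 0 * q) q n)
      = (1 - k * q ^ (2*n)) * qpoch (k^2) (q^2) n / ((1 - k) * qpoch (q^2) (q^2) n)
        * (-1) ^ n * q ^ (n^2)" for n
    unfolding qpoch_mult_minus[symmetric] by (simp add: divide_inverse inverse_mult_distrib mult_ac)
  moreover have "qpoch_inf (k * q) q * qpoch_inf (-1 * 0 * q) q / (qpoch_inf (-1 * q) q * qpoch_inf (k * 0 * q) q)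
      = qpoch_inf (k*q) q * qpoch_inf q (q^2)"
  proof -
    have "qpoch_inf (-q) q \<noteq> 0"
      using euler_odd_distinct[OF q] by auto
    then show ?thesis
      using euler_odd_distinct[OF q] by (simp add: field_simps)
  qed
  moreover have "\<forall>n. qpoch (-1 * q) q n \<noteq> 0"
    using q by (intro allI qpoch_nonzero) auto
  ultimately show ?thesis
    using wp_sums[OF q k, of "-1" 0] by simp
qed

lemma identity_5:
  fixes q k :: complex
  assumes q: "norm q < 1" and k: "k \<noteq> 1" and kq: "\<forall>n. qpoch (-k*q) (q^2) n \<noteq> 0"
  shows "(\<lambda>n. (1 - k * q ^ (4*n)) * (qpoch (-q) (q^2) n * qpoch (k^2) (q^4) n)
          / ((1 - k) * (qpoch (-k*q) (q^2) n * qpoch (q^4) (q^4) n))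
          * (-1) ^ n * q ^ (n^2))
      sums (qpoch_inf (k*q^2) (q^2) * qpoch_inf q q
            / (qpoch_inf (-k*q) (q^2) * qpoch_inf (q^4) (q^4)))" (is "?f sums ?R")
proof (cases "q = 0")
  case True
  have "?f sums (?f 0 + ?f 1)"
    by (rule sums_two_terms) (simp add: True)
  moreover have "?f 0 + ?f 1 = ?R"
    using k by (simp add: True qpoch_q_0 qpoch_inf_q_0)
  ultimately show ?thesis
    by simp
next
  case False
  define p where "p = q\<^sup>2"
  have p: "norm p < 1"
    using q by (simp add: p_def norm_power power_less_one_iff)
  have "wp_num p k (-1) (-1/q) n = (-1) ^ n * (\<Prod>i<n. (1 - (-k) * p ^ i) * (1 - (-q) * p ^ i)) * q ^ n\<^sup>2" for n
    unfolding wp_num_def sum_2i_plus_1[symmetric] p_def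
    by (rule prod_factorwise) (unfold power_linear power_square_base power_Suc, use False in \<open>simp add: field_simps\<close>, algebra)
  then have "wp_num p k (-1) (-1/q) n = (-1) ^ n * (qpoch (-k) p n * qpoch (-q) p n) * q ^ n\<^sup>2" for n
    by (simp add: qpoch_def prod.distrib)
  moreover have UC: "-1 * (-1/q) * p = q" and aC: "k * (-1/q) * p = -k*q"
    using False by (simp_all add: p_def power2_eq_square)
  moreover have "p ^ (2 * n) = q ^ (4 * n)" for n
    by (simp add: p_def flip: power_mult)
  moreover have "\<forall>n. qpoch (-1 * p) p n \<noteq> 0"
    using p by (intro allI qpoch_nonzero) auto
  moreover have "q ^ 4 = p\<^sup>2"
    by (simp add: p_def flip: power_mult)
  moreover have rhs: "qpoch_inf (k * p) p * qpoch_inf q p / (qpoch_inf (-1 * p) p * qpoch_inf (-k * q) p)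
      = qpoch_inf (k * p) p * qpoch_inf q q / (qpoch_inf (-k * q) p * qpoch_inf (q ^ 4) (q ^ 4))"
  proof -
    have "norm (q ^ 4) < 1"
      using q by (simp add: norm_power power_less_one_iff)
    then have "qpoch_inf (-p) p \<noteq> 0" "qpoch_inf (q ^ 4) (q ^ 4) \<noteq> 0" "qpoch_inf (-k * q) p \<noteq> 0"
      using p kq by (simp_all add: qpoch_inf_nonzero qpoch_nonzero p_def)
    then show ?thesis
      using qpoch_inf_odd_mult_fourth[OF q] by (simp add: p_def field_simps)
  qed
  ultimately show ?thesis
    using wp_sums[OF p k, of "-1" "-1/q", unfolded UC aC rhs] kq unfolding p_def[symmetric]
    by (simp add: qpoch_mult_minus[symmetric] divide_inverse inverse_mult_distrib mult_ac)
qed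

lemma identity_6:
  fixes q k :: complex
  assumes q: "norm q < 1" and k: "k \<noteq> 1"
  shows "(\<lambda>n. (1 - k * q ^ (4*n)) * qpoch k q (2*n) / ((1 - k) * qpoch q q (2*n))
          * q ^ (2*n^2 - n))
      sums (qpoch_inf (k*q^2) (q^2) / qpoch_inf q (q^2))" (is "?f sums ?R")
proof (cases "q = 0")
  case True
  have "?f sums (?f 0 + ?f 1)"
  proof (rule sums_two_terms)
    fix n :: nat assume "2 \<le> n"
    then have "2 * n\<^sup>2 - n \<noteq> 0"
      by (simp add: power2_eq_square)
    then show "?f n = 0"
      by (simp add: True)
  qed
  moreover have "?f 0 + ?f 1 = ?R"
    using k by (simp add: True qpoch_q_0 qpoch_inf_q_0)
  ultimately show ?thesis
    by simp
next
  case False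
  define p where "p = q\<^sup>2"
  have p: "norm p < 1"
    using q by (simp add: p_def norm_power power_less_one_iff)
  have "wp_num p k (1/q) 0 n = 1 ^ n * qpoch (k * q) p n * q ^ (2 * n\<^sup>2 - n)" for n
    unfolding wp_num_def qpoch_def sum_4i_plus_1[symmetric] p_def
    by (rule prod_factorwise) (unfold power_linear power_square_base power_Suc, use False in \<open>simp add: field_simps\<close>, algebra)
  moreover have U: "1/q * p = q" and "q * q = p"
    using False by (simp_all add: p_def power2_eq_square)
  moreover have "p ^ (2 * n) = q ^ (4 * n)" for n
    by (simp add: p_def flip: power_mult)
  moreover have "\<forall>n. qpoch q p n \<noteq> 0"
    using q p by (intro allI qpoch_nonzero) auto
  ultimately show ?thesis
    using wp_sums[OF p k, of "1/q" 0, unfolded U] unfolding qpoch_double p_def[symmetric]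
    by (simp add: divide_inverse inverse_mult_distrib mult_ac)
qed

lemma identity_7:
  fixes q k :: complex
  assumes q: "norm q < 1" and k: "k \<noteq> 1" and kq: "\<forall>n. qpoch (-k*q) (q^2) n \<noteq> 0"
  shows "(\<lambda>n. (1 - k * q ^ (4*n)) * (qpoch (-q) (q^2) n * qpoch k q (2*n))
          / ((1 - k) * (qpoch (-k*q) (q^2) n * qpoch q q (2*n)))
          * q ^ (n^2 - n))
      sums (qpoch_inf (k*q^2) (q^2) * qpoch_inf (-1) (q^2)
            / (qpoch_inf (-k*q) (q^2) * qpoch_inf q (q^2)))" (is "?f sums ?R")
proof (cases "q = 0")
  case True
  have "?f sums (?f 0 + ?f 1)"
  proof (rule sums_two_terms)
    fix n :: nat assume "2 \<le> n"
    then have "n\<^sup>2 - n \<noteq> 0"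
      by (simp add: power2_eq_square)
    then show "?f n = 0"
      by (simp add: True)
  qed
  moreover have "?f 0 + ?f 1 = ?R"
    using k by (simp add: True qpoch_q_0 qpoch_inf_q_0 numeral_2_eq_2)
  ultimately show ?thesis
    by simp
next
  case False
  define p where "p = q\<^sup>2"
  have p: "norm p < 1"
    using q by (simp add: p_def norm_power power_less_one_iff)
  have "wp_num p k (1/q) (-1/q) n = 1 ^ n * (\<Prod>i<n. (1 - k * q * p ^ i) * (1 - (-q) * p ^ i)) * q ^ (n\<^sup>2 - n)" for n
    unfolding wp_num_def sum_2i[symmetric] p_def
    by (rule prod_factorwise) (unfold power_mult power_square_base power_Suc, use False in \<open>simp add: field_simps\<close>, algebra)
  then have "wp_num p k (1/q) (-1/q) n = qpoch (k * q) p n * qpoch (-q) p n * q ^ (n\<^sup>2 - n)" for n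
    by (simp add: qpoch_def prod.distrib)
  moreover have U: "1/q * p = q" and UC: "1/q * (-1/q) * p = -1" and aC: "k * (-1/q) * p = -k*q"
    and "q * q = p"
    using False by (simp_all add: p_def power2_eq_square)
  moreover have "p ^ (2 * n) = q ^ (4 * n)" for n
    by (simp add: p_def flip: power_mult)
  moreover have "\<forall>n. qpoch q p n \<noteq> 0"
    using q p by (intro allI qpoch_nonzero) auto
  ultimately show ?thesis
    using wp_sums[OF p k, of "1/q" "-1/q", unfolded U UC aC] kq unfolding qpoch_double p_def[symmetric]
    by (simp add: divide_inverse inverse_mult_distrib mult_ac)
qed

theorem mainTheorem16:
  fixes q k :: complex
  assumes hq: "norm q < 1" and hk: "k \<noteq> 1"
  shows
   "((\<lambda>n. (1 - k * q ^ (2*n)) * qpoch k q n / ((1 - k) * qpoch q q n)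
          * (-1) ^ n * k ^ n * q ^ (n * (3*n - 1) div 2))
      sums qpoch_inf (k*q) q) \<and>
   ((\<forall>n. qpoch (-k*q) (q^2) n \<noteq> 0) \<longrightarrow>
    (\<lambda>n. (1 - k * q ^ (4*n)) * (qpoch (-q) (q^2) n * qpoch k (q^2) n)
          / ((1 - k) * (qpoch (-k*q) (q^2) n * qpoch (q^2) (q^2) n))
          * (-1) ^ n * k ^ n * q ^ (2*n^2 - n))
      sums (qpoch_inf (k*q^2) (q^2) / qpoch_inf (-k*q) (q^2))) \<and>
   ((\<forall>n. qpoch (-k*q) q n \<noteq> 0) \<longrightarrow>
    (\<lambda>n. (1 - k * q ^ (2*n)) * (qpoch (-1) q n * qpoch k q n)
          / ((1 - k) * (qpoch (-k*q) q n * qpoch q q n))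
          * (-1) ^ n * k ^ n * q ^ (n^2))
      sums (qpoch_inf (k*q) q / qpoch_inf (-k*q) q)) \<and>
   ((\<lambda>n. (1 - k * q ^ (2*n)) * qpoch (k^2) (q^2) n / ((1 - k) * qpoch (q^2) (q^2) n)
          * (-1) ^ n * q ^ (n^2))
      sums (qpoch_inf (k*q) q * qpoch_inf q (q^2))) \<and>
   ((\<forall>n. qpoch (-k*q) (q^2) n \<noteq> 0) \<longrightarrow>
    (\<lambda>n. (1 - k * q ^ (4*n)) * (qpoch (-q) (q^2) n * qpoch (k^2) (q^4) n)
          / ((1 - k) * (qpoch (-k*q) (q^2) n * qpoch (q^4) (q^4) n))
          * (-1) ^ n * q ^ (n^2))
      sums (qpoch_inf (k*q^2) (q^2) * qpoch_inf q q
            / (qpoch_inf (-k*q) (q^2) * qpoch_inf (q^4) (q^4)))) \<and>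
   ((\<lambda>n. (1 - k * q ^ (4*n)) * qpoch k q (2*n) / ((1 - k) * qpoch q q (2*n))
          * q ^ (2*n^2 - n))
      sums (qpoch_inf (k*q^2) (q^2) / qpoch_inf q (q^2))) \<and>
   ((\<forall>n. qpoch (-k*q) (q^2) n \<noteq> 0) \<longrightarrow>
    (\<lambda>n. (1 - k * q ^ (4*n)) * (qpoch (-q) (q^2) n * qpoch k q (2*n))
          / ((1 - k) * (qpoch (-k*q) (q^2) n * qpoch q q (2*n)))
          * q ^ (n^2 - n))
      sums (qpoch_inf (k*q^2) (q^2) * qpoch_inf (-1) (q^2)
            / (qpoch_inf (-k*q) (q^2) * qpoch_inf q (q^2))))"
  using identity_1[OF hq hk] identity_2[OF hq hk] identity_3[OF hq hk] identity_4[OF hq hk]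
    identity_5[OF hq hk] identity_6[OF hq hk] identity_7[OF hq hk]
  by blast

end
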